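(* Let $G=(V,E)$ be a finite simple graph on $n$ vertices with no isolated vertex. Let $\mathcal{A}$ be the set of all graphs $G'$ with vertex set $V$ that can be obtained as follows: for each vertex $v\in V$, if $\deg_G(v)\ge 2$, choose two distinct neighbors $u,w$ of $v$ in $G$ and put the edge $uw$ into $G'$; if $\deg_G(v)=1$, put a loop on the unique neighbor of $v$ into $G'$ (an edge already present is not duplicated). Let $G'_{\min}\in\mathcal{A}$ minimize $n-\alpha(G')$ over $G'\in\mathcal{A}$. Then $$\gamma_t(G)=n-\alpha(G'_{\min})=\beta(G'_{\min}).$$
   Context: A set $S\subseteq V$ is a total dominating set of $G$ if every vertex $v\in V$ has a neighbor in $S$; $\gamma_t(G)$ is the minimum size of a total dominating set of $G$. For a graph $H$ possibly with loops, an independent set is a set of vertices containing no two endpoints of an edge and no vertex carrying a loop, and $\alpha(H)$ is the maximum size of an independent set; a vertex cover is a set of vertices meeting every edge (so it contains every vertex carrying a loop), and $\beta(H)$ is the minimum size of a vertex cover. *)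

theory Defs
  imports Main
begin

definition simple_graph :: "'a set \<Rightarrow> ('a \<Rightarrow> 'a \<Rightarrow> bool) \<Rightarrow> bool" where
  "simple_graph V E \<longleftrightarrow> finite V \<and> (\<forall>u v. E u v \<longrightarrow> u \<in> V \<and> v \<in> V)
     \<and> (\<forall>u v. E u v \<longrightarrow> E v u) \<and> (\<forall>v. \<not> E v v)"

definition nbhd :: "('a \<Rightarrow> 'a \<Rightarrow> bool) \<Rightarrow> 'a \<Rightarrow> 'a set" where
  "nbhd E v = {u. E v u}"

definition deg :: "('a \<Rightarrow> 'a \<Rightarrow> bool) \<Rightarrow> 'a \<Rightarrow> nat" where
  "deg E v = card (nbhd E v)"

definition total_dominating_set :: "'a set \<Rightarrow> ('a \<Rightarrow> 'a \<Rightarrow> bool) \<Rightarrow> 'a set \<Rightarrow> bool" where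
  "total_dominating_set V E S \<longleftrightarrow> S \<subseteq> V \<and> (\<forall>v\<in>V. \<exists>u\<in>S. E v u)"

definition gamma_t :: "'a set \<Rightarrow> ('a \<Rightarrow> 'a \<Rightarrow> bool) \<Rightarrow> nat" where
  "gamma_t V E = Min {card S | S. total_dominating_set V E S}"

(* Graph H possibly with loops, on vertex set V, given by its edge set F:
   an edge {u,w} (u \<noteq> w) is an ordinary edge, a singleton {u} is a loop on u. *)
definition independent_set :: "'a set \<Rightarrow> 'a set set \<Rightarrow> 'a set \<Rightarrow> bool" where
  "independent_set V F I \<longleftrightarrow> I \<subseteq> V \<and> (\<forall>e\<in>F. \<not> e \<subseteq> I)"

definition vertex_cover :: "'a set \<Rightarrow> 'a set set \<Rightarrow> 'a set \<Rightarrow> bool" where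
  "vertex_cover V F C \<longleftrightarrow> C \<subseteq> V \<and> (\<forall>e\<in>F. e \<inter> C \<noteq> {})"

definition alpha :: "'a set \<Rightarrow> 'a set set \<Rightarrow> nat" where
  "alpha V F = Max {card I | I. independent_set V F I}"

definition beta :: "'a set \<Rightarrow> 'a set set \<Rightarrow> nat" where
  "beta V F = Min {card C | C. vertex_cover V F C}"

definition derived_graphs :: "'a set \<Rightarrow> ('a \<Rightarrow> 'a \<Rightarrow> bool) \<Rightarrow> 'a set set set" where
  "derived_graphs V E = {F. \<exists>f.
     (\<forall>v\<in>V. deg E v \<ge> 2 \<longrightarrow> (\<exists>u w. u \<noteq> w \<and> E v u \<and> E v w \<and> f v = {u, w}))
   \<and> (\<forall>v\<in>V. deg E v = 1 \<longrightarrow> (\<exists>u. nbhd E v = {u} \<and> f v = {u}))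
   \<and> F = f ` V}"

end

theory Submission
  imports Defs
begin

(* A vertex cover C of a graph G' in \<A> is a total dominating set of G: the edge that v
   contributes to G' lies in the neighbourhood of v and meets C.  Conversely, from a total
   dominating set S choose for every v an edge through a neighbour of v in S; the resulting
   G' lies in \<A> and is covered by S.  Hence \<gamma>_t(G) is the least \<beta>(G') over \<A>, and
   \<beta>(G') = n - \<alpha>(G') because complements of independent sets are exactly vertex covers. *)

lemma finite_cards_of_subsets:
  assumes "finite V" and "\<And>S. P S \<Longrightarrow> S \<subseteq> V"
  shows "finite {card S | S. P S}"
proof (rule finite_subset[of _ "{..card V}"])
  show "{card S | S. P S} \<subseteq> {..card V}"
    using assms by (auto intro: card_mono)
qed simp

lemma alpha_ge_card:
  assumes "finite V" and "independent_set V F I"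
  shows "card I \<le> alpha V F"
  unfolding alpha_def
  using assms finite_cards_of_subsets[of V "independent_set V F"]
  by (intro Max_ge) (auto simp: independent_set_def)

lemma alpha_attained:
  assumes "finite V" and "{} \<notin> F"
  obtains I where "independent_set V F I" and "card I = alpha V F"
proof -
  have "independent_set V F {}"
    using assms(2) by (auto simp: independent_set_def)
  then have "alpha V F \<in> {card I | I. independent_set V F I}"
    unfolding alpha_def
    using assms(1) finite_cards_of_subsets[of V "independent_set V F"]
    by (intro Max_in) (auto simp: independent_set_def)
  then show ?thesis using that by auto
qed

lemma beta_le_card:
  assumes "finite V" and "vertex_cover V F C"
  shows "beta V F \<le> card C"
  unfolding beta_def
  using assms finite_cards_of_subsets[of V "vertex_cover V F"]
  by (intro Min_le) (auto simp: vertex_cover_def)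

lemma beta_attained:
  assumes "finite V" and "vertex_cover V F C\<^sub>0"
  obtains C where "vertex_cover V F C" and "card C = beta V F"
proof -
  have "beta V F \<in> {card C | C. vertex_cover V F C}"
    unfolding beta_def
    using assms finite_cards_of_subsets[of V "vertex_cover V F"]
    by (intro Min_in) (auto simp: vertex_cover_def)
  then show ?thesis using that by auto
qed

lemma vertex_cover_Diff_independent_set:
  assumes "\<forall>e\<in>F. e \<subseteq> V" and "independent_set V F I"
  shows "vertex_cover V F (V - I)"
  using assms unfolding independent_set_def vertex_cover_def by blast

lemma independent_set_Diff_vertex_cover:
  assumes "vertex_cover V F C"
  shows "independent_set V F (V - C)"
  using assms unfolding independent_set_def vertex_cover_def by blast

lemma beta_eq_card_minus_alpha:
  assumes fin: "finite V" and edges: "\<forall>e\<in>F. e \<noteq> {} \<and> e \<subseteq> V"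
  shows "beta V F = card V - alpha V F"
proof (rule antisym)
  obtain I where I: "independent_set V F I" "card I = alpha V F"
    using alpha_attained[OF fin] edges by blast
  have "beta V F \<le> card (V - I)"
    using beta_le_card[OF fin] vertex_cover_Diff_independent_set I(1) edges by blast
  also have "\<dots> = card V - alpha V F"
    using I fin by (metis card_Diff_subset finite_subset independent_set_def)
  finally show "beta V F \<le> card V - alpha V F" .
next
  have "vertex_cover V F V"
    using edges by (auto simp: vertex_cover_def)
  then obtain C where C: "vertex_cover V F C" "card C = beta V F"
    using beta_attained[OF fin] by blast
  have "C \<subseteq> V"
    using C(1) by (simp add: vertex_cover_def)
  then have "card V - beta V F = card (V - C)"
    using C(2) fin by (simp add: card_Diff_subset finite_subset)
  also have "\<dots> \<le> alpha V F"
    using alpha_ge_card[OF fin independent_set_Diff_vertex_cover[OF C(1)]] .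
  finally show "card V - alpha V F \<le> beta V F"
    using \<open>C \<subseteq> V\<close> C(2) fin card_mono by fastforce
qed

lemma gamma_t_le_card:
  assumes "finite V" and "total_dominating_set V E S"
  shows "gamma_t V E \<le> card S"
  unfolding gamma_t_def
  using assms finite_cards_of_subsets[of V "total_dominating_set V E"]
  by (intro Min_le) (auto simp: total_dominating_set_def)

lemma gamma_t_attained:
  assumes "finite V" and "total_dominating_set V E S\<^sub>0"
  obtains S where "total_dominating_set V E S" and "card S = gamma_t V E"
proof -
  have "gamma_t V E \<in> {card S | S. total_dominating_set V E S}"
    unfolding gamma_t_def
    using assms finite_cards_of_subsets[of V "total_dominating_set V E"]
    by (intro Min_in) (auto simp: total_dominating_set_def)
  then show ?thesis using that by auto
qed

lemma total_dominating_set_vertex_set: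
  assumes "simple_graph V E" and "\<forall>v\<in>V. \<exists>u. E v u"
  shows "total_dominating_set V E V"
  using assms unfolding total_dominating_set_def simple_graph_def by blast

lemma nbhd_subset:
  assumes "simple_graph V E"
  shows "nbhd E v \<subseteq> V"
  using assms by (auto simp: simple_graph_def nbhd_def)

lemma finite_nbhd:
  assumes "simple_graph V E"
  shows "finite (nbhd E v)"
  using assms nbhd_subset finite_subset by (metis simple_graph_def)

lemma derived_graphsE:
  assumes sg: "simple_graph V E" and no_isolated: "\<forall>v\<in>V. \<exists>u. E v u"
    and "F \<in> derived_graphs V E"
  obtains f where "F = f ` V" and "\<forall>v\<in>V. f v \<noteq> {} \<and> f v \<subseteq> nbhd E v"
proof -
  obtain f where
    two: "\<forall>v\<in>V. deg E v \<ge> 2 \<longrightarrow> (\<exists>u w. u \<noteq> w \<and> E v u \<and> E v w \<and> f v = {u, w})" and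
    one: "\<forall>v\<in>V. deg E v = 1 \<longrightarrow> (\<exists>u. nbhd E v = {u} \<and> f v = {u})" and
    "F = f ` V"
    using assms(3) unfolding derived_graphs_def by blast
  moreover have "\<forall>v\<in>V. f v \<noteq> {} \<and> f v \<subseteq> nbhd E v"
  proof
    fix v
    assume v: "v \<in> V"
    have "nbhd E v \<noteq> {}"
      using no_isolated v by (auto simp: nbhd_def)
    then have "deg E v \<ge> 1"
      using finite_nbhd[OF sg, of v] by (simp add: deg_def Suc_le_eq card_gt_0_iff)
    then have "deg E v \<ge> 2 \<or> deg E v = 1"
      by linarith
    then show "f v \<noteq> {} \<and> f v \<subseteq> nbhd E v"
    proof
      assume "deg E v \<ge> 2"
      then show ?thesis
        using two v by (auto simp: nbhd_def)
    next
      assume "deg E v = 1"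
      then show ?thesis
        using one v by auto
    qed
  qed
  ultimately show ?thesis
    using that by blast
qed

lemma derived_graph_edges:
  assumes "simple_graph V E" and "\<forall>v\<in>V. \<exists>u. E v u" and "F \<in> derived_graphs V E"
  shows "\<forall>e\<in>F. e \<noteq> {} \<and> e \<subseteq> V"
proof -
  obtain f where "F = f ` V" and "\<forall>v\<in>V. f v \<noteq> {} \<and> f v \<subseteq> nbhd E v"
    by (rule derived_graphsE[OF assms])
  then show ?thesis
    using nbhd_subset[OF assms(1)] by blast
qed

lemma total_dominating_set_if_vertex_cover:
  assumes "\<forall>v\<in>V. f v \<subseteq> nbhd E v" and "vertex_cover V (f ` V) C"
  shows "total_dominating_set V E C"
  unfolding total_dominating_set_def
proof (intro conjI ballI)
  show "C \<subseteq> V"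
    using assms(2) by (simp add: vertex_cover_def)
  show "\<exists>u\<in>C. E v u" if "v \<in> V" for v
    using assms that unfolding vertex_cover_def nbhd_def by blast
qed

lemma derived_graph_covered_by_total_dominating_set:
  assumes S: "total_dominating_set V E S"
  shows "\<exists>F\<in>derived_graphs V E. vertex_cover V F S"
proof -
  define s where "s v = (SOME u. u \<in> S \<and> E v u)" for v
  have s: "s v \<in> S \<and> E v (s v)" if "v \<in> V" for v
  proof -
    have "\<exists>u. u \<in> S \<and> E v u"
      using S that by (auto simp: total_dominating_set_def)
    then show ?thesis
      unfolding s_def by (rule someI_ex)
  qed
  define t where "t v = (SOME w. E v w \<and> w \<noteq> s v)" for v
  have t: "E v (t v) \<and> t v \<noteq> s v" if "deg E v \<ge> 2" for v
  proof -
    have "\<not> nbhd E v \<subseteq> {s v}"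
      using that card_mono[of "{s v}" "nbhd E v"] by (auto simp: deg_def)
    then have "\<exists>w. E v w \<and> w \<noteq> s v"
      by (auto simp: nbhd_def)
    then show ?thesis
      unfolding t_def by (rule someI_ex)
  qed
  define f where "f v = (if deg E v \<ge> 2 then {s v, t v} else {s v})" for v
  have "f ` V \<in> derived_graphs V E"
    unfolding derived_graphs_def
  proof (intro CollectI exI[of _ f] conjI ballI impI refl)
    show "\<exists>u w. u \<noteq> w \<and> E v u \<and> E v w \<and> f v = {u, w}" if "v \<in> V" "deg E v \<ge> 2" for v
      using s[OF that(1)] t[OF that(2)] that(2) unfolding f_def by (metis (full_types))
    show "\<exists>u. nbhd E v = {u} \<and> f v = {u}" if v: "v \<in> V" and deg1: "deg E v = 1" for v
    proof -
      obtain u where u: "nbhd E v = {u}"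
        using deg1 by (auto simp: deg_def card_1_singleton_iff)
      then have "s v = u"
        using s[OF v] by (auto simp: nbhd_def)
      then show ?thesis
        using u deg1 by (simp add: f_def)
    qed
  qed
  moreover have "vertex_cover V (f ` V) S"
    using S s unfolding vertex_cover_def total_dominating_set_def f_def by auto
  ultimately show ?thesis by blast
qed

lemma gamma_t_le_beta_derived:
  assumes sg: "simple_graph V E" and no_isolated: "\<forall>v\<in>V. \<exists>u. E v u"
    and F: "F \<in> derived_graphs V E"
  shows "gamma_t V E \<le> beta V F"
proof -
  have fin: "finite V"
    using sg by (simp add: simple_graph_def)
  obtain f where f: "F = f ` V" "\<forall>v\<in>V. f v \<noteq> {} \<and> f v \<subseteq> nbhd E v"
    by (rule derived_graphsE[OF sg no_isolated F])
  have "vertex_cover V F V"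
    using derived_graph_edges[OF sg no_isolated F] by (auto simp: vertex_cover_def)
  then obtain C where C: "vertex_cover V F C" "card C = beta V F"
    using beta_attained[OF fin] by blast
  have "total_dominating_set V E C"
    using total_dominating_set_if_vertex_cover[of V f E C] f C(1) by blast
  then show ?thesis
    using gamma_t_le_card[OF fin] C(2) by metis
qed

lemma beta_derived_le_gamma_t:
  assumes sg: "simple_graph V E" and no_isolated: "\<forall>v\<in>V. \<exists>u. E v u"
  shows "\<exists>F\<in>derived_graphs V E. beta V F \<le> gamma_t V E"
proof -
  have fin: "finite V"
    using sg by (simp add: simple_graph_def)
  obtain S where S: "total_dominating_set V E S" "card S = gamma_t V E"
    by (rule gamma_t_attained[OF fin total_dominating_set_vertex_set[OF sg no_isolated]])
  then show ?thesis
    using derived_graph_covered_by_total_dominating_set beta_le_card[OF fin] by metis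
qed

theorem theorem2p2:
  fixes V :: "'a set" and E :: "'a \<Rightarrow> 'a \<Rightarrow> bool" and Fmin :: "'a set set"
  assumes "simple_graph V E"
    and "\<forall>v\<in>V. \<exists>u. E v u"
    and "Fmin \<in> derived_graphs V E"
    and "\<forall>F\<in>derived_graphs V E. card V - alpha V Fmin \<le> card V - alpha V F"
  shows "gamma_t V E = card V - alpha V Fmin \<and> card V - alpha V Fmin = beta V Fmin"
proof -
  have gallai: "beta V F = card V - alpha V F" if "F \<in> derived_graphs V E" for F
    using assms(1) derived_graph_edges[OF assms(1,2) that]
    by (intro beta_eq_card_minus_alpha) (simp_all add: simple_graph_def)
  obtain F where F: "F \<in> derived_graphs V E" "beta V F \<le> gamma_t V E"
    using beta_derived_le_gamma_t[OF assms(1,2)] by blast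
  have "beta V Fmin \<le> beta V F"
    using assms(4) F(1) gallai[OF F(1)] gallai[OF assms(3)] by simp
  moreover have "gamma_t V E \<le> beta V Fmin"
    using gamma_t_le_beta_derived[OF assms(1-3)] .
  ultimately show ?thesis
    using F(2) gallai[OF assms(3)] by linarith
qed

end
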